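(* Let $p(z)$ be any non-constant polynomial with roots $r_1,\dots,r_n$ of multiplicities $M_1,\dots,M_n$. Then $p$ satisfies the generalised root identities for all $\mu\in\mathbb{C}$ and all $z_0\in\mathbb{C}$ off the branch cuts, that is, $$d_p(z_0,\mu)=e^{i\pi\mu}\sum_{i=1}^n\frac{M_i}{(z_0-r_i)^{\mu}}.$$ When $\mu\notin\mathbb{Z}$, "off the branch cuts" means $z_0\notin\bigcup_i\big(r_i+(-\infty,0]\big)$. This holds in particular for every $z_0$ with $\operatorname{Re}(z_0)>\max_i\operatorname{Re}(r_i)$.
   Context: Powers $w^{\mu}$ use the principal branch. For a function $f$, the derivative side of the generalised root identities is $$d_f(z_0,\mu)=-\frac{1}{\Gamma(\mu)}\frac{1}{2\pi}\int_{-\infty}^{\infty}(i\xi)^{\mu}\,\mathcal{F}[\ln f](\xi)\,e^{iz_0\xi}\,d\xi,$$ where $\mathcal{F}$ is the Fourier transform (with $\mathcal{F}[g(\cdot+a)](\xi)=\mathcal{F}[g](\xi)e^{ia\xi}$) and $\mathcal{F}[\ln z](\xi)=-2\pi\tilde H_0(\xi)/\xi$. Here $\tilde H_0(\xi)=\tfrac12$ for $\xi>0$ and $-\tfrac12$ for $\xi<0$. The branch of $(i\xi)^{\mu}$ is $e^{i\pi\mu/2}\xi^{\mu}$ for $\xi>0$ and $e^{3i\pi\mu/2}|\xi|^{\mu}$ for $\xi<0$. The integral is understood as follows: as an ordinary $\mu$-th derivative $-\frac{1}{\Gamma(\mu)}(d/dz)^{\mu}\ln f|_{z_0}$ for positive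 integer $\mu$; distributionally (via derivatives of the Dirac delta) for $\mu\in\mathbb{Z}_{\le0}$; and by analytic continuation in $(z_0,\mu)$ otherwise. For $f$ a polynomial, $\ln f$ is the sum of the logarithms of its linear factors. The root side is $e^{i\pi\mu}\sum_i M_i(z_0-r_i)^{-\mu}$, summed over the roots $r_i$ of $f$ with multiplicities $M_i$. *)

theory Defs
  imports "HOL-Complex_Analysis.Complex_Analysis" "HOL-Computational_Algebra.Polynomial"
begin

text \<open>Roots of a complex polynomial; multiplicity is the library notion order r p.\<close>

definition roots_of :: "complex poly \<Rightarrow> complex set" where
  "roots_of p = {r. poly p r = 0}"

definition Htil :: "real \<Rightarrow> complex" where
  "Htil xi = (if xi > 0 then 1/2 else if xi < 0 then -1/2 else 0)"

text \<open>The branch of (i xi)^mu prescribed in the paper.\<close>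

definition ipow :: "real \<Rightarrow> complex \<Rightarrow> complex" where
  "ipow xi mu =
     (if xi > 0 then exp (\<i> * pi * mu / 2) * (of_real xi) powr mu
      else if xi < 0 then exp (3 * \<i> * pi * mu / 2) * (of_real \<bar>xi\<bar>) powr mu
      else 0)"

text \<open>Fourier transform of ln z: F[ln z](xi) = -2 pi H0(xi)/xi.\<close>

definition FT_ln :: "real \<Rightarrow> complex" where
  "FT_ln xi = - 2 * of_real pi * Htil xi / of_real xi"

text \<open>Fourier transform of ln p = sum of M_r ln(z - r) over the roots, using the shift rule
  F[g(. + a)](xi) = F[g](xi) e^{i a xi} with a = -r.\<close>

definition FT_ln_poly :: "complex poly \<Rightarrow> real \<Rightarrow> complex" where
  "FT_ln_poly p xi =
     (\<Sum>r\<in>roots_of p. of_nat (order r p) * (FT_ln xi * exp (\<i> * (- r) * of_real xi)))"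

definition gri_integrand :: "complex poly \<Rightarrow> complex \<Rightarrow> complex \<Rightarrow> real \<Rightarrow> complex" where
  "gri_integrand p z0 mu xi =
     - rGamma mu / (2 * of_real pi) * ipow xi mu * FT_ln_poly p xi * exp (\<i> * z0 * of_real xi)"

text \<open>The two half-line parts of the integral (each converges on its own region).\<close>

definition gri_plus :: "complex poly \<Rightarrow> complex \<Rightarrow> complex \<Rightarrow> complex" where
  "gri_plus p z0 mu = (LINT xi:{0<..}|lborel. gri_integrand p z0 mu xi)"

definition gri_minus :: "complex poly \<Rightarrow> complex \<Rightarrow> complex \<Rightarrow> complex" where
  "gri_minus p z0 mu = (LINT xi:{..<0}|lborel. gri_integrand p z0 mu xi)"

definition conv_plus :: "complex poly \<Rightarrow> (complex \<times> complex) set" where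
  "conv_plus p = {(z, mu). 0 < Re mu \<and> (\<forall>r\<in>roots_of p. 0 < Im (z - r))}"

definition conv_minus :: "complex poly \<Rightarrow> (complex \<times> complex) set" where
  "conv_minus p = {(z, mu). 0 < Re mu \<and> (\<forall>r\<in>roots_of p. Im (z - r) < 0)}"

text \<open>Natural z-domains of the continuations of the two halves (cuts r - i[0,oo), r + i[0,oo)),
  of the final function (cuts r + (-oo,0]), and the right region where the halves are added.\<close>

definition dom_plus :: "complex poly \<Rightarrow> complex set" where
  "dom_plus p = {z. \<forall>r\<in>roots_of p. \<forall>t::real. t \<ge> 0 \<longrightarrow> z \<noteq> r - \<i> * of_real t}"

definition dom_minus :: "complex poly \<Rightarrow> complex set" where
  "dom_minus p = {z. \<forall>r\<in>roots_of p. \<forall>t::real. t \<ge> 0 \<longrightarrow> z \<noteq> r + \<i> * of_real t}"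

definition cut_domain :: "complex poly \<Rightarrow> complex set" where
  "cut_domain p = {z. \<forall>r\<in>roots_of p. \<forall>t::real. t \<le> 0 \<longrightarrow> z \<noteq> r + of_real t}"

definition right_region :: "complex poly \<Rightarrow> complex set" where
  "right_region p = {z. \<forall>r\<in>roots_of p. Re r < Re z}"

text \<open>Analyticity in (z, mu) on A x C, expressed as separate holomorphy
  (equivalent to joint holomorphy by Hartogs' theorem).\<close>

definition sep_holo :: "(complex \<Rightarrow> complex \<Rightarrow> complex) \<Rightarrow> complex set \<Rightarrow> bool" where
  "sep_holo D A \<longleftrightarrow> (\<forall>mu. (\<lambda>z. D z mu) holomorphic_on A) \<and> (\<forall>z\<in>A. (\<lambda>mu. D z mu) holomorphic_on UNIV)"

definition is_cont_plus :: "complex poly \<Rightarrow> (complex \<Rightarrow> complex \<Rightarrow> complex) \<Rightarrow> bool" where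
  "is_cont_plus p G \<longleftrightarrow> sep_holo G (dom_plus p) \<and> (\<forall>(z, mu)\<in>conv_plus p. G z mu = gri_plus p z mu)"

definition is_cont_minus :: "complex poly \<Rightarrow> (complex \<Rightarrow> complex \<Rightarrow> complex) \<Rightarrow> bool" where
  "is_cont_minus p G \<longleftrightarrow> sep_holo G (dom_minus p) \<and> (\<forall>(z, mu)\<in>conv_minus p. G z mu = gri_minus p z mu)"

text \<open>D is the analytic continuation (in (z0, mu)) of the integral defining d_p.\<close>

definition is_dp_cont :: "complex poly \<Rightarrow> (complex \<Rightarrow> complex \<Rightarrow> complex) \<Rightarrow> bool" where
  "is_dp_cont p D \<longleftrightarrow> sep_holo D (cut_domain p) \<and>
     (\<exists>Gp Gm. is_cont_plus p Gp \<and> is_cont_minus p Gm \<and>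
        (\<forall>z\<in>right_region p. \<forall>mu. D z mu = Gp z mu + Gm z mu))"

text \<open>The derivative side d_p(z0, mu):
  positive integer mu: ordinary mu-th derivative of ln p (i.e. (mu-1)-th derivative of p'/p);
  non-positive integer mu: the (entire) extension in z0 of the continuation at that mu;
  otherwise: the analytic continuation.\<close>

definition dp :: "complex poly \<Rightarrow> complex \<Rightarrow> complex \<Rightarrow> complex" where
  "dp p z0 mu =
     (if mu \<in> \<int> \<and> 0 < Re mu then
        - rGamma mu * (deriv ^^ (nat \<lfloor>Re mu\<rfloor> - 1)) (\<lambda>z. poly (pderiv p) z / poly p z) z0
      else if mu \<in> \<int> then
        (THE v. \<exists>D E. is_dp_cont p D \<and> E holomorphic_on UNIV \<and>
                 (\<forall>z\<in>cut_domain p. E z = D z mu) \<and> E z0 = v)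
      else (THE v. \<exists>D. is_dp_cont p D \<and> D z0 mu = v))"

end

theory Submission
  imports Defs "HOL-Computational_Algebra.Fundamental_Theorem_Algebra"
begin

text \<open>On each half-line the integrand is a finite sum over the roots \<open>r\<close> of Gamma kernels
  \<open>t\<^sup>\<mu>\<^sup>-\<^sup>1 e\<^sup>-\<^sup>a\<^sup>t\<close> with \<open>a = \<mp>\<i>(z\<^sub>0 - r)\<close>. The Gamma integral with complex rate
  \<open>a = b - c\<close>, \<open>|c| < b\<close>, follows from the real one by integrating the exponential series of
  \<open>e\<^sup>c\<^sup>t\<close> termwise and summing the binomial series. So for \<open>Re \<mu> > 0\<close> and \<open>z\<^sub>0\<close> above
  (below) all roots the half integrals have closed forms in \<open>(\<mp>\<i>(z\<^sub>0 - r))\<^sup>-\<^sup>\<mu>\<close>, holomorphic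
  on slit planes. To the right of all roots \<open>Ln (\<plusminus>\<i> w) = Ln w \<plusminus> \<i>\<pi>/2\<close>, so the two closed forms
  add up to the root side. The identity theorem, first in \<open>z\<^sub>0\<close> and then in \<open>\<mu>\<close>, forces every
  continuation to agree with them, which determines \<open>d\<^sub>p\<close> off the cuts. At positive integers the
  same value comes from differentiating \<open>p'/p = \<Sigma> M\<^sub>r/(z - r)\<close>; at nonpositive integers the root
  side is a polynomial in \<open>z\<^sub>0\<close>, hence its own entire extension.\<close>

section \<open>Gamma integrals with complex rate\<close>

lemma Gamma_set_integral_real_rate:
  assumes "0 < Re \<nu>" "0 < b"
  shows "set_integrable lborel {0<..} (\<lambda>t. of_real t powr (\<nu> - 1) * exp (- (of_real b * of_real t)))"
    and "(LINT t:{0<..}|lborel. of_real t powr (\<nu> - 1) * exp (- (of_real b * of_real t))) =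
           Gamma \<nu> * of_real b powr (- \<nu>)"
proof -
  define f where "f = (\<lambda>t. indicator {0<..} t *\<^sub>R (complex_of_real t powr (\<nu> - 1) / of_real (exp t)))"
  define h where "h = (\<lambda>t. indicator {0<..} t *\<^sub>R (complex_of_real t powr (\<nu> - 1) * exp (- (of_real b * of_real t))))"
  have f_integrable: "integrable lborel f"
  proof -
    have "(\<lambda>t. complex_of_real t powr (\<nu> - 1) / of_real (exp t)) absolutely_integrable_on {0<..}"
      using absolutely_integrable_Gamma_integral'[OF assms(1)] .
    moreover have "f \<in> borel_measurable borel"
      unfolding f_def by (rule borel_measurable_continuous_on_indicator) (auto intro!: continuous_intros)
    ultimately show ?thesis
      using integrable_completion[of f lborel] unfolding f_def set_integrable_def
      by (simp add: measurable_lborel1)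
  qed
  have f_integral: "integral\<^sup>L lborel f = Gamma \<nu>"
    using set_borel_integral_eq_integral(2)[of "{0<..}" "\<lambda>t. of_real t powr (\<nu> - 1) / of_real (exp t)"]
      f_integrable Gamma_integral_complex'[OF assms(1)]
    by (simp add: f_def set_integrable_def set_lebesgue_integral_def integral_unique)
  have f_scaled: "f (b * x) = of_real b powr (\<nu> - 1) * h x" for x
  proof (cases "x > 0")
    case True
    have "complex_of_real (b * x) powr (\<nu> - 1) = of_real b powr (\<nu> - 1) * of_real x powr (\<nu> - 1)"
      using True assms by (subst of_real_mult, intro powr_times_real) auto
    then show ?thesis
      using True assms by (simp add: f_def h_def exp_minus of_real_exp divide_inverse mult_ac)
  qed (use assms in \<open>simp add: f_def h_def zero_less_mult_iff\<close>)
  have bpow_nz: "complex_of_real b powr (\<nu> - 1) \<noteq> 0"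
    using assms by simp
  have "integrable lborel (\<lambda>x. of_real b powr (\<nu> - 1) * h x)"
    using lborel_integrable_real_affine[OF f_integrable, of b 0] assms by (simp add: f_scaled)
  then have "integrable lborel (\<lambda>x. inverse (of_real b powr (\<nu> - 1)) * (of_real b powr (\<nu> - 1) * h x))"
    by (rule integrable_mult_right)
  then show "set_integrable lborel {0<..} (\<lambda>t. of_real t powr (\<nu> - 1) * exp (- (of_real b * of_real t)))"
    using bpow_nz by (simp add: h_def set_integrable_def mult.assoc[symmetric])
  have "Gamma \<nu> = of_real b * (of_real b powr (\<nu> - 1) * integral\<^sup>L lborel h)"
    using f_integral lborel_integral_real_affine[of b f 0] assms
    by (simp add: f_scaled scaleR_conv_of_real)
  also have "\<dots> = of_real b powr \<nu> * integral\<^sup>L lborel h"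
    using assms by (simp add: powr_diff)
  finally show "(LINT t:{0<..}|lborel. of_real t powr (\<nu> - 1) * exp (- (of_real b * of_real t))) =
      Gamma \<nu> * of_real b powr (- \<nu>)"
    using assms by (simp add: h_def set_lebesgue_integral_def powr_minus field_simps)
qed

lemma Gamma_shift_powr_eq_gbinomial:
  fixes \<mu> c :: complex
  assumes "0 < Re \<mu>" "0 < b"
  shows "Gamma (\<mu> + of_nat k) * of_real b powr (- (\<mu> + of_nat k)) * (c ^ k / fact k) =
         Gamma \<mu> * of_real b powr (- \<mu>) * (((- \<mu>) gchoose k) * (- c / of_real b) ^ k)"
proof -
  have "\<mu> \<notin> \<int>\<^sub>\<le>\<^sub>0"
    using assms(1) by (auto elim!: nonpos_Ints_cases)
  then have Gamma_shift: "Gamma (\<mu> + of_nat k) = pochhammer \<mu> k * Gamma \<mu>"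
    using pochhammer_Gamma[of \<mu> k] Gamma_nonzero[of \<mu>] by simp
  have powr_shift: "complex_of_real b powr (- (\<mu> + of_nat k)) = of_real b powr (- \<mu>) / of_real b ^ k"
    using assms(2) by (simp add: powr_diff powr_nat' diff_conv_add_uminus[symmetric])
  have gchoose: "(- \<mu>) gchoose k = (- 1) ^ k * pochhammer \<mu> k / fact k"
    by (simp add: gbinomial_pochhammer)
  have power: "(- c / of_real b) ^ k = (- 1) ^ k * c ^ k / of_real b ^ k"
    by (metis power_divide power_minus)
  have "(- 1 :: complex) ^ k * (- 1) ^ k = 1"
    by (simp flip: power_mult_distrib)
  then have "Gamma \<mu> * of_real b powr (- \<mu>) * (((- \<mu>) gchoose k) * (- c / of_real b) ^ k) =
               pochhammer \<mu> k * Gamma \<mu> * (of_real b powr (- \<mu>) / of_real b ^ k) * (c ^ k / fact k)"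
    unfolding gchoose power by (simp add: mult_ac)
  then show ?thesis
    unfolding Gamma_shift powr_shift by simp
qed

definition Gamma_kernel_term :: "complex \<Rightarrow> real \<Rightarrow> complex \<Rightarrow> nat \<Rightarrow> real \<Rightarrow> complex" where
  "Gamma_kernel_term \<mu> b c k t =
     indicator {0<..} t *\<^sub>R (of_real t powr (\<mu> + of_nat k - 1) * exp (- (of_real b * of_real t))) *
     (c ^ k / fact k)"

lemma integrable_Gamma_kernel_term:
  assumes "0 < Re \<mu>" "0 < b"
  shows "integrable lborel (Gamma_kernel_term \<mu> b c k)"
  using Gamma_set_integral_real_rate(1)[of "\<mu> + of_nat k" b] assms
  unfolding Gamma_kernel_term_def set_integrable_def by (intro integrable_mult_left) simp

lemma integral_Gamma_kernel_term:
  assumes "0 < Re \<mu>" "0 < b"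
  shows "integral\<^sup>L lborel (Gamma_kernel_term \<mu> b c k) =
           Gamma \<mu> * of_real b powr (- \<mu>) * (((- \<mu>) gchoose k) * (- c / of_real b) ^ k)"
  using Gamma_set_integral_real_rate(2)[of "\<mu> + of_nat k" b] Gamma_shift_powr_eq_gbinomial[OF assms] assms
  unfolding Gamma_kernel_term_def set_lebesgue_integral_def integral_mult_left_zero by simp

lemma Gamma_kernel_term_pos:
  assumes "0 < t"
  shows "Gamma_kernel_term \<mu> b c k t =
           (of_real t powr (\<mu> - 1) * exp (- (of_real b * of_real t))) * ((c * of_real t) ^ k /\<^sub>R fact k)"
proof -
  have "complex_of_real t powr (\<mu> + of_nat k - 1) = of_real t powr ((\<mu> - 1) + of_nat k)"
    by (simp add: algebra_simps)
  also have "\<dots> = of_real t powr (\<mu> - 1) * of_real t ^ k"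
    using assms by (simp add: powr_add powr_nat')
  finally show ?thesis
    using assms by (simp add: Gamma_kernel_term_def power_mult_distrib scaleR_conv_of_real divide_inverse mult_ac)
qed

lemma Gamma_kernel_term_sums:
  "(\<lambda>k. Gamma_kernel_term \<mu> b c k t) sums
     (indicator {0<..} t *\<^sub>R (of_real t powr (\<mu> - 1) * exp (- ((of_real b - c) * of_real t))))"
proof (cases "0 < t")
  case True
  have "(\<lambda>k. (of_real t powr (\<mu> - 1) * exp (- (of_real b * of_real t))) * ((c * of_real t) ^ k /\<^sub>R fact k))
          sums ((of_real t powr (\<mu> - 1) * exp (- (of_real b * of_real t))) * exp (c * of_real t))"
    by (intro sums_mult exp_converges)
  moreover have "exp (- (of_real b * of_real t)) * exp (c * of_real t) = exp (- ((of_real b - c) * of_real t))"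
    by (simp add: exp_add[symmetric] algebra_simps)
  ultimately show ?thesis
    using True by (simp add: Gamma_kernel_term_pos mult.assoc)
qed (simp add: Gamma_kernel_term_def)

lemma norm_Gamma_kernel_term:
  "complex_of_real (norm (Gamma_kernel_term \<mu> b c k t)) =
     Gamma_kernel_term (of_real (Re \<mu>)) b (of_real (norm c)) k t"
proof (cases "0 < t")
  case True
  have "complex_of_real t powr (of_real (Re \<mu>) + of_nat k - 1) = of_real (t powr (Re \<mu> + k - 1))"
    using True powr_of_real[of t "Re \<mu> + k - 1"] by simp
  moreover have "norm (complex_of_real t powr (\<mu> + of_nat k - 1)) = t powr (Re \<mu> + k - 1)"
    using True by (simp add: norm_powr_real_powr)
  ultimately show ?thesis
    using True by (simp add: Gamma_kernel_term_def norm_mult norm_divide norm_power of_real_exp)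
qed (simp add: Gamma_kernel_term_def)

lemma summable_norm_Gamma_kernel_term: "summable (\<lambda>k. norm (Gamma_kernel_term \<mu> b c k t))"
  using sums_summable[OF Gamma_kernel_term_sums[of "of_real (Re \<mu>)" b "of_real (norm c)" t]]
  by (simp only: norm_Gamma_kernel_term[symmetric] summable_complex_of_real)

lemma summable_integral_norm_Gamma_kernel_term:
  assumes "0 < Re \<mu>" "0 < b" "norm c < b"
  shows "summable (\<lambda>k. \<integral>t. norm (Gamma_kernel_term \<mu> b c k t) \<partial>lborel)"
proof -
  define \<sigma> where "\<sigma> = complex_of_real (Re \<mu>)"
  have "complex_of_real (\<integral>t. norm (Gamma_kernel_term \<mu> b c k t) \<partial>lborel) =
          (\<integral>t. complex_of_real (norm (Gamma_kernel_term \<mu> b c k t)) \<partial>lborel)" for k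
    by simp
  also have "\<dots> k = integral\<^sup>L lborel (Gamma_kernel_term \<sigma> b (of_real (norm c)) k)" for k
    unfolding norm_Gamma_kernel_term \<sigma>_def ..
  also have "\<dots> k = Gamma \<sigma> * of_real b powr (- \<sigma>) *
                     (((- \<sigma>) gchoose k) * (- of_real (norm c) / of_real b) ^ k)" for k
    using assms by (intro integral_Gamma_kernel_term) (simp_all add: \<sigma>_def)
  finally have "summable (\<lambda>k. complex_of_real (\<integral>t. norm (Gamma_kernel_term \<mu> b c k t) \<partial>lborel))"
    using assms by (simp add: summable_mult sums_summable[OF gen_binomial_complex] norm_divide)
  then show ?thesis
    by simp
qed

lemma right_half_plane_disc:
  assumes "0 < Re a"
  obtains b :: real where "0 < b" "norm (of_real b - a) < b"
proof
  define b where "b = (norm a)\<^sup>2 / Re a"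
  have "a \<noteq> 0"
    using assms by auto
  then show "0 < b"
    using assms by (simp add: b_def)
  have "(norm (of_real b - a))\<^sup>2 = b\<^sup>2 - 2 * (b * Re a) + (norm a)\<^sup>2"
    unfolding cmod_power2 by (simp add: power2_eq_square algebra_simps)
  also have "\<dots> = b\<^sup>2 - (norm a)\<^sup>2"
    using assms by (simp add: b_def)
  also have "\<dots> < b\<^sup>2"
    using \<open>a \<noteq> 0\<close> by simp
  finally show "norm (of_real b - a) < b"
    using \<open>0 < b\<close> by (simp add: power_less_imp_less_base)
qed

lemma Gamma_set_integral_complex_rate:
  assumes "0 < Re a" "0 < Re \<mu>"
  shows "set_integrable lborel {0<..} (\<lambda>t. of_real t powr (\<mu> - 1) * exp (- (a * of_real t)))"
    and "(LINT t:{0<..}|lborel. of_real t powr (\<mu> - 1) * exp (- (a * of_real t))) = Gamma \<mu> * a powr (- \<mu>)"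
proof -
  obtain b where b: "0 < b" "norm (of_real b - a) < b"
    using right_half_plane_disc[OF assms(1)] .
  define f where "f = Gamma_kernel_term \<mu> b (of_real b - a)"
  have f_integrable: "integrable lborel (f k)" for k
    unfolding f_def using assms b by (intro integrable_Gamma_kernel_term)
  have suminf_f: "(\<lambda>t. \<Sum>k. f k t) = (\<lambda>t. indicator {0<..} t *\<^sub>R (of_real t powr (\<mu> - 1) * exp (- (a * of_real t))))"
    using Gamma_kernel_term_sums[of \<mu> b "of_real b - a"] by (auto simp: f_def sums_iff)
  have summable_norms: "summable (\<lambda>k. \<integral>t. norm (f k t) \<partial>lborel)"
    unfolding f_def using assms b by (intro summable_integral_norm_Gamma_kernel_term)
  have "integrable lborel (\<lambda>t. \<Sum>k. f k t)"
    using integrable_suminf[OF f_integrable _ summable_norms] summable_norm_Gamma_kernel_term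
    by (simp add: f_def)
  then show "set_integrable lborel {0<..} (\<lambda>t. of_real t powr (\<mu> - 1) * exp (- (a * of_real t)))"
    by (simp add: suminf_f set_integrable_def)
  have "(\<lambda>k. integral\<^sup>L lborel (f k)) sums (\<integral>t. (\<Sum>k. f k t) \<partial>lborel)"
    using sums_integral[OF f_integrable _ summable_norms] summable_norm_Gamma_kernel_term
    by (simp add: f_def)
  moreover have "(\<lambda>k. integral\<^sup>L lborel (f k)) sums (Gamma \<mu> * of_real b powr (- \<mu>) * (a / of_real b) powr (- \<mu>))"
  proof -
    have "1 + - (of_real b - a) / of_real b = a / complex_of_real b"
      using b by (simp add: field_simps)
    then show ?thesis
      using gen_binomial_complex[of "- (of_real b - a) / of_real b" "- \<mu>"] assms b
      by (simp add: f_def integral_Gamma_kernel_term norm_divide norm_minus_commute sums_mult)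
  qed
  moreover have "complex_of_real b powr (- \<mu>) * (a / of_real b) powr (- \<mu>) = a powr (- \<mu>)"
    using b powr_times_real_left[of b "a / of_real b" "- \<mu>"] by simp
  ultimately show "(LINT t:{0<..}|lborel. of_real t powr (\<mu> - 1) * exp (- (a * of_real t))) = Gamma \<mu> * a powr (- \<mu>)"
    by (simp add: suminf_f set_lebesgue_integral_def sums_unique2 mult.assoc)
qed

lemma Gamma_set_integral_sum:
  assumes "finite R" "0 < Re \<mu>" "\<And>r. r \<in> R \<Longrightarrow> 0 < Re (a r)"
  shows "(LINT t:{0<..}|lborel. \<Sum>r\<in>R. c r * (of_real t powr (\<mu> - 1) * exp (- (a r * of_real t)))) =
           Gamma \<mu> * (\<Sum>r\<in>R. c r * a r powr (- \<mu>))"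
proof -
  have integrable: "set_integrable lborel {0<..} (\<lambda>t. c r * (of_real t powr (\<mu> - 1) * exp (- (a r * of_real t))))"
    if "r \<in> R" for r
    using Gamma_set_integral_complex_rate(1)[OF assms(3)[OF that] assms(2)] by (rule set_integrable_mult_right)
  have "(LINT t:{0<..}|lborel. \<Sum>r\<in>R. c r * (of_real t powr (\<mu> - 1) * exp (- (a r * of_real t)))) =
          (\<Sum>r\<in>R. LINT t:{0<..}|lborel. c r * (of_real t powr (\<mu> - 1) * exp (- (a r * of_real t))))"
    unfolding set_lebesgue_integral_def scaleR_sum_right
    using integrable by (intro Bochner_Integration.integral_sum) (simp add: set_integrable_def)
  also have "\<dots> = (\<Sum>r\<in>R. c r * (Gamma \<mu> * a r powr (- \<mu>)))"
    using assms by (intro sum.cong refl) (simp add: Gamma_set_integral_complex_rate(2))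
  finally show ?thesis
    by (simp add: sum_distrib_left mult_ac)
qed

section \<open>Closed forms of the half-line integrals\<close>

lemma finite_roots_of: "p \<noteq> 0 \<Longrightarrow> finite (roots_of p)"
  unfolding roots_of_def by (rule poly_roots_finite)

definition gri_plus_closed :: "complex poly \<Rightarrow> complex \<Rightarrow> complex \<Rightarrow> complex" where
  "gri_plus_closed p z \<mu> =
     (\<Sum>r\<in>roots_of p. exp (\<i> * pi * \<mu> / 2) * of_nat (order r p) / 2 * (- \<i> * (z - r)) powr (- \<mu>))"

definition gri_minus_closed :: "complex poly \<Rightarrow> complex \<Rightarrow> complex \<Rightarrow> complex" where
  "gri_minus_closed p z \<mu> =
     (\<Sum>r\<in>roots_of p. exp (3 * \<i> * pi * \<mu> / 2) * of_nat (order r p) / 2 * (\<i> * (z - r)) powr (- \<mu>))"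

definition root_side :: "complex poly \<Rightarrow> complex \<Rightarrow> complex \<Rightarrow> complex" where
  "root_side p z \<mu> = exp (\<i> * pi * \<mu>) * (\<Sum>r\<in>roots_of p. of_nat (order r p) / (z - r) powr \<mu>)"

lemma gri_integrand_eq_sum:
  "gri_integrand p z \<mu> \<xi> =
     (\<Sum>r\<in>roots_of p. - rGamma \<mu> / (2 * of_real pi) * ipow \<xi> \<mu> * of_nat (order r p) * FT_ln \<xi> *
        exp (\<i> * (z - r) * of_real \<xi>))"
proof -
  have "exp (\<i> * (- r) * of_real \<xi>) * exp (\<i> * z * of_real \<xi>) = exp (\<i> * (z - r) * of_real \<xi>)" for r
    by (simp add: exp_add[symmetric] algebra_simps)
  then show ?thesis
    unfolding gri_integrand_def FT_ln_poly_def sum_distrib_left sum_distrib_right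
    by (intro sum.cong refl) (metis (no_types, lifting) mult.assoc)
qed

lemma gri_integrand_pos:
  assumes "0 < \<xi>"
  shows "gri_integrand p z \<mu> \<xi> =
           (\<Sum>r\<in>roots_of p. rGamma \<mu> * (exp (\<i> * pi * \<mu> / 2) * of_nat (order r p) / 2) *
              (of_real \<xi> powr (\<mu> - 1) * exp (- ((- \<i> * (z - r)) * of_real \<xi>))))"
  unfolding gri_integrand_eq_sum
proof (intro sum.cong refl)
  fix r
  have "complex_of_real \<xi> powr (\<mu> - 1) = of_real \<xi> powr \<mu> / of_real \<xi>"
    by (simp add: powr_diff)
  moreover have "- ((- \<i> * (z - r)) * of_real \<xi>) = \<i> * (z - r) * of_real \<xi>"
    by simp
  ultimately show "- rGamma \<mu> / (2 * of_real pi) * ipow \<xi> \<mu> * of_nat (order r p) * FT_ln \<xi> *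
        exp (\<i> * (z - r) * of_real \<xi>) =
      rGamma \<mu> * (exp (\<i> * pi * \<mu> / 2) * of_nat (order r p) / 2) *
        (of_real \<xi> powr (\<mu> - 1) * exp (- ((- \<i> * (z - r)) * of_real \<xi>)))"
    using assms by (simp add: ipow_def FT_ln_def Htil_def field_simps)
qed

lemma gri_integrand_neg:
  assumes "0 < s"
  shows "gri_integrand p z \<mu> (- s) =
           (\<Sum>r\<in>roots_of p. rGamma \<mu> * (exp (3 * \<i> * pi * \<mu> / 2) * of_nat (order r p) / 2) *
              (of_real s powr (\<mu> - 1) * exp (- ((\<i> * (z - r)) * of_real s))))"
  unfolding gri_integrand_eq_sum
proof (intro sum.cong refl)
  fix r
  have "complex_of_real s powr (\<mu> - 1) = of_real s powr \<mu> / of_real s"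
    by (simp add: powr_diff)
  moreover have "- ((\<i> * (z - r)) * of_real s) = \<i> * (z - r) * of_real (- s)"
    by simp
  ultimately show "- rGamma \<mu> / (2 * of_real pi) * ipow (- s) \<mu> * of_nat (order r p) * FT_ln (- s) *
        exp (\<i> * (z - r) * of_real (- s)) =
      rGamma \<mu> * (exp (3 * \<i> * pi * \<mu> / 2) * of_nat (order r p) / 2) *
        (of_real s powr (\<mu> - 1) * exp (- ((\<i> * (z - r)) * of_real s)))"
    using assms by (simp add: ipow_def FT_ln_def Htil_def field_simps)
qed

lemma Gamma_mult_rGamma_cancel:
  assumes "0 < Re \<mu>"
  shows "Gamma \<mu> * (rGamma \<mu> * x) = x"
proof -
  have "\<mu> \<notin> \<int>\<^sub>\<le>\<^sub>0"
    using assms by (auto elim!: nonpos_Ints_cases)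
  then show ?thesis
    by (simp add: rGamma_inverse_Gamma Gamma_nonzero)
qed

lemma gri_plus_eq_closed:
  assumes "p \<noteq> 0" "(z, \<mu>) \<in> conv_plus p"
  shows "gri_plus p z \<mu> = gri_plus_closed p z \<mu>"
proof -
  have \<mu>: "0 < Re \<mu>" and above: "\<And>r. r \<in> roots_of p \<Longrightarrow> 0 < Re (- \<i> * (z - r))"
    using assms(2) by (auto simp: conv_plus_def)
  have "gri_plus p z \<mu> =
          (LINT \<xi>:{0<..}|lborel. \<Sum>r\<in>roots_of p. rGamma \<mu> * (exp (\<i> * pi * \<mu> / 2) * of_nat (order r p) / 2) *
             (of_real \<xi> powr (\<mu> - 1) * exp (- ((- \<i> * (z - r)) * of_real \<xi>))))"
    unfolding gri_plus_def by (rule set_lebesgue_integral_cong) (auto simp: gri_integrand_pos)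
  also have "\<dots> = Gamma \<mu> * (\<Sum>r\<in>roots_of p.
                      rGamma \<mu> * (exp (\<i> * pi * \<mu> / 2) * of_nat (order r p) / 2) * (- \<i> * (z - r)) powr (- \<mu>))"
    by (rule Gamma_set_integral_sum[OF finite_roots_of[OF assms(1)] \<mu> above])
  also have "\<dots> = gri_plus_closed p z \<mu>"
    unfolding gri_plus_closed_def mult.assoc sum_distrib_left[symmetric] Gamma_mult_rGamma_cancel[OF \<mu>] ..
  finally show ?thesis .
qed

lemma gri_minus_eq_closed:
  assumes "p \<noteq> 0" "(z, \<mu>) \<in> conv_minus p"
  shows "gri_minus p z \<mu> = gri_minus_closed p z \<mu>"
proof -
  have \<mu>: "0 < Re \<mu>" and below: "\<And>r. r \<in> roots_of p \<Longrightarrow> 0 < Re (\<i> * (z - r))"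
    using assms(2) by (auto simp: conv_minus_def)
  have "gri_minus p z \<mu> = (LINT s:{0<..}|lborel. gri_integrand p z \<mu> (- s))"
    unfolding gri_minus_def by (subst set_integral_reflect) (simp add: greaterThan_def)
  also have "\<dots> =
          (LINT s:{0<..}|lborel. \<Sum>r\<in>roots_of p. rGamma \<mu> * (exp (3 * \<i> * pi * \<mu> / 2) * of_nat (order r p) / 2) *
             (of_real s powr (\<mu> - 1) * exp (- ((\<i> * (z - r)) * of_real s))))"
    by (rule set_lebesgue_integral_cong) (auto simp: gri_integrand_neg)
  also have "\<dots> = Gamma \<mu> * (\<Sum>r\<in>roots_of p.
                      rGamma \<mu> * (exp (3 * \<i> * pi * \<mu> / 2) * of_nat (order r p) / 2) * (\<i> * (z - r)) powr (- \<mu>))"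
    by (rule Gamma_set_integral_sum[OF finite_roots_of[OF assms(1)] \<mu> below])
  also have "\<dots> = gri_minus_closed p z \<mu>"
    unfolding gri_minus_closed_def mult.assoc sum_distrib_left[symmetric] Gamma_mult_rGamma_cancel[OF \<mu>] ..
  finally show ?thesis .
qed

lemma cut_domain_not_nonpos_Reals:
  "z \<in> cut_domain p \<Longrightarrow> r \<in> roots_of p \<Longrightarrow> z - r \<notin> \<real>\<^sub>\<le>\<^sub>0"
  unfolding cut_domain_def complex_nonpos_Reals_iff
  by (auto simp: complex_eq_iff dest!: spec[of _ "Re (z - r)"])

lemma dom_plus_not_nonpos_Reals:
  "z \<in> dom_plus p \<Longrightarrow> r \<in> roots_of p \<Longrightarrow> - \<i> * (z - r) \<notin> \<real>\<^sub>\<le>\<^sub>0"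
  unfolding dom_plus_def complex_nonpos_Reals_iff
  by (auto simp: complex_eq_iff dest!: spec[of _ "Im (r - z)"])

lemma dom_minus_not_nonpos_Reals:
  "z \<in> dom_minus p \<Longrightarrow> r \<in> roots_of p \<Longrightarrow> \<i> * (z - r) \<notin> \<real>\<^sub>\<le>\<^sub>0"
  unfolding dom_minus_def complex_nonpos_Reals_iff
  by (auto simp: complex_eq_iff dest!: spec[of _ "Im (z - r)"])

lemma cut_domain_not_root: "z \<in> cut_domain p \<Longrightarrow> z \<notin> roots_of p"
  unfolding cut_domain_def by force

lemma sep_holo_root_side: "sep_holo (root_side p) (cut_domain p)"
  unfolding sep_holo_def root_side_def
  using cut_domain_not_nonpos_Reals[of _ p] cut_domain_not_root[of _ p]
  by (intro conjI allI ballI holomorphic_intros) (auto simp: powr_def)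

lemma sep_holo_gri_plus_closed: "sep_holo (gri_plus_closed p) (dom_plus p)"
  unfolding sep_holo_def gri_plus_closed_def
  using dom_plus_not_nonpos_Reals[of _ p]
  by (auto intro!: holomorphic_intros)

lemma sep_holo_gri_minus_closed: "sep_holo (gri_minus_closed p) (dom_minus p)"
  unfolding sep_holo_def gri_minus_closed_def
  using dom_minus_not_nonpos_Reals[of _ p]
  by (auto intro!: holomorphic_intros)

lemma powr_neg_rotate_ii:
  assumes "0 < Re w"
  shows "(- \<i> * w) powr (- \<mu>) = exp (\<i> * pi * \<mu> / 2) / w powr \<mu>"
    and "(\<i> * w) powr (- \<mu>) = exp (- (\<i> * pi * \<mu> / 2)) / w powr \<mu>"
proof -
  have "w \<noteq> 0" and "\<bar>Im (Ln w)\<bar> < pi / 2"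
    using assms Re_Ln_pos_lt_imp by auto
  then have "Ln (- \<i> * w) = Ln (- \<i>) + Ln w" and "Ln (\<i> * w) = Ln \<i> + Ln w"
    by (intro Ln_times_simple; auto)+
  then have Ln_rotate: "Ln (- \<i> * w) = Ln w - \<i> * pi / 2" "Ln (\<i> * w) = Ln w + \<i> * pi / 2"
    by simp_all
  have "- \<mu> * (Ln w - \<i> * pi / 2) = \<i> * pi * \<mu> / 2 - \<mu> * Ln w"
    and "- \<mu> * (Ln w + \<i> * pi / 2) = - (\<i> * pi * \<mu> / 2) - \<mu> * Ln w"
    by algebra+
  with \<open>w \<noteq> 0\<close> show "(- \<i> * w) powr (- \<mu>) = exp (\<i> * pi * \<mu> / 2) / w powr \<mu>"
    and "(\<i> * w) powr (- \<mu>) = exp (- (\<i> * pi * \<mu> / 2)) / w powr \<mu>"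
    unfolding powr_def Ln_rotate by (simp_all add: exp_diff)
qed

lemma gri_closed_add_eq_root_side:
  assumes "z \<in> right_region p"
  shows "gri_plus_closed p z \<mu> + gri_minus_closed p z \<mu> = root_side p z \<mu>"
  unfolding gri_plus_closed_def gri_minus_closed_def root_side_def sum.distrib[symmetric] sum_distrib_left
proof (intro sum.cong refl)
  fix r
  assume "r \<in> roots_of p"
  then have "0 < Re (z - r)"
    using assms by (simp add: right_region_def)
  note rotate = powr_neg_rotate_ii[OF this, of \<mu>]
  have "exp (\<i> * pi * \<mu> / 2) * of_nat (order r p) / 2 * (- \<i> * (z - r)) powr - \<mu> +
      exp (3 * \<i> * pi * \<mu> / 2) * of_nat (order r p) / 2 * (\<i> * (z - r)) powr - \<mu> =
      (exp (\<i> * pi * \<mu> / 2) * exp (\<i> * pi * \<mu> / 2) + exp (3 * \<i> * pi * \<mu> / 2) * exp (- (\<i> * pi * \<mu> / 2))) / 2 *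
        (of_nat (order r p) / (z - r) powr \<mu>)"
    unfolding rotate by (simp only: algebra_simps add_divide_distrib times_divide_eq_left times_divide_eq_right)
  also have "exp (\<i> * pi * \<mu> / 2) * exp (\<i> * pi * \<mu> / 2) + exp (3 * \<i> * pi * \<mu> / 2) * exp (- (\<i> * pi * \<mu> / 2)) =
               2 * exp (\<i> * pi * \<mu>)"
    by (simp add: exp_add[symmetric] algebra_simps)
  finally show "exp (\<i> * pi * \<mu> / 2) * of_nat (order r p) / 2 * (- \<i> * (z - r)) powr - \<mu> +
      exp (3 * \<i> * pi * \<mu> / 2) * of_nat (order r p) / 2 * (\<i> * (z - r)) powr - \<mu> =
      exp (\<i> * pi * \<mu>) * (of_nat (order r p) / (z - r) powr \<mu>)"
    by simp
qed

section \<open>Uniqueness of the continuation\<close>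

lemma roots_of_bound:
  assumes "p \<noteq> 0"
  obtains B where "\<And>r. r \<in> roots_of p \<Longrightarrow> \<bar>Re r\<bar> < B \<and> \<bar>Im r\<bar> < B"
proof -
  obtain a where "\<forall>r\<in>roots_of p. norm r \<le> a"
    using finite_imp_bounded[OF finite_roots_of[OF assms]] unfolding bounded_iff by blast
  then have "\<bar>Re r\<bar> < a + 1 \<and> \<bar>Im r\<bar> < a + 1" if "r \<in> roots_of p" for r
    using that abs_Re_le_cmod[of r] abs_Im_le_cmod[of r] by fastforce
  then show ?thesis
    using that by blast
qed

lemma open_right_region:
  assumes "p \<noteq> 0"
  shows "open (right_region p)"
proof -
  have "right_region p = (\<Inter>r\<in>roots_of p. {z. Re r < Re z})"
    by (auto simp: right_region_def)
  then show ?thesis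
    using finite_roots_of[OF assms] by (auto intro!: open_INT open_halfspace_Re_gt)
qed

lemma convex_right_region: "convex (right_region p)"
proof -
  have "right_region p = (\<Inter>r\<in>roots_of p. {z. Re r < Re z})"
    by (auto simp: right_region_def)
  then show ?thesis
    by (auto intro!: convex_INT convex_halfspace_Re_gt)
qed

lemma right_region_subset_dom_plus: "right_region p \<subseteq> dom_plus p"
  by (auto simp: right_region_def dom_plus_def)

lemma right_region_subset_dom_minus: "right_region p \<subseteq> dom_minus p"
  by (auto simp: right_region_def dom_minus_def)

lemma right_region_subset_cut_domain: "right_region p \<subseteq> cut_domain p"
  by (force simp: right_region_def cut_domain_def)

lemma right_region_nonempty:
  assumes "p \<noteq> 0"
  shows "right_region p \<noteq> {}"
proof -
  obtain B where "\<And>r. r \<in> roots_of p \<Longrightarrow> \<bar>Re r\<bar> < B \<and> \<bar>Im r\<bar> < B"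
    using roots_of_bound[OF assms] by blast
  then have "Complex B 0 \<in> right_region p"
    by (fastforce simp: right_region_def)
  then show ?thesis
    by blast
qed

lemma sep_holo_eq_on_connected:
  assumes F: "sep_holo F A" and G: "sep_holo G A"
    and S: "open S" "connected S" "S \<subseteq> A" and T: "open T" "T \<noteq> {}" "T \<subseteq> S"
    and eq: "\<And>z \<mu>. z \<in> T \<Longrightarrow> 0 < Re \<mu> \<Longrightarrow> F z \<mu> = G z \<mu>"
    and "z \<in> S"
  shows "F z \<mu> = G z \<mu>"
proof -
  have "z \<in> A"
    using S(3) \<open>z \<in> S\<close> by blast
  have right_half: "F z \<nu> = G z \<nu>" if "0 < Re \<nu>" for \<nu>
  proof (rule analytic_continuation_open[of T S "\<lambda>z. F z \<nu>" "\<lambda>z. G z \<nu>"])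
    show "(\<lambda>z. F z \<nu>) holomorphic_on S"
      using F S(3) unfolding sep_holo_def by (metis holomorphic_on_subset)
    show "(\<lambda>z. G z \<nu>) holomorphic_on S"
      using G S(3) unfolding sep_holo_def by (metis holomorphic_on_subset)
  qed (use S T eq[OF _ that] \<open>z \<in> S\<close> in auto)
  have holo: "F z holomorphic_on UNIV" "G z holomorphic_on UNIV"
    using F G \<open>z \<in> A\<close> unfolding sep_holo_def by simp_all
  have "{\<nu>. 0 < Re \<nu>} \<noteq> {}"
    by (auto intro!: exI[of _ 1])
  then show ?thesis
    by (rule analytic_continuation_open[of "{\<nu>. 0 < Re \<nu>}" UNIV "F z" "G z", rotated 2])
       (simp_all add: holo right_half open_halfspace_Re_gt connected_UNIV)
qed

lemma is_cont_plus_eq_closed: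
  assumes "p \<noteq> 0" "is_cont_plus p G" "z \<in> right_region p"
  shows "G z \<mu> = gri_plus_closed p z \<mu>"
proof -
  obtain B where B: "\<And>r. r \<in> roots_of p \<Longrightarrow> \<bar>Re r\<bar> < B \<and> \<bar>Im r\<bar> < B"
    using roots_of_bound[OF assms(1)] by blast
  define T where "T = right_region p \<inter> {z. B < Im z}"
  have "Complex B (B + 1) \<in> T"
    using B by (fastforce simp: T_def right_region_def)
  have T_eq: "G w \<nu> = gri_plus_closed p w \<nu>" if "w \<in> T" "0 < Re \<nu>" for w \<nu>
  proof -
    have "(w, \<nu>) \<in> conv_plus p"
      using that B by (fastforce simp: T_def conv_plus_def)
    then show ?thesis
      using assms(1,2) gri_plus_eq_closed by (auto simp: is_cont_plus_def)
  qed
  show ?thesis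
  proof (rule sep_holo_eq_on_connected[of G "dom_plus p" "gri_plus_closed p" "right_region p" T])
    show "sep_holo G (dom_plus p)"
      using assms(2) by (simp add: is_cont_plus_def)
    show "open T"
      unfolding T_def by (intro open_Int open_right_region assms(1) open_halfspace_Im_gt)
    show "T \<noteq> {}"
      using \<open>Complex B (B + 1) \<in> T\<close> by blast
  qed (use assms(1,3) T_eq convex_right_region sep_holo_gri_plus_closed right_region_subset_dom_plus in
        \<open>auto simp: T_def convex_connected open_right_region\<close>)
qed

lemma is_cont_minus_eq_closed:
  assumes "p \<noteq> 0" "is_cont_minus p G" "z \<in> right_region p"
  shows "G z \<mu> = gri_minus_closed p z \<mu>"
proof -
  obtain B where B: "\<And>r. r \<in> roots_of p \<Longrightarrow> \<bar>Re r\<bar> < B \<and> \<bar>Im r\<bar> < B"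
    using roots_of_bound[OF assms(1)] by blast
  define T where "T = right_region p \<inter> {z. Im z < - B}"
  have "Complex B (- B - 1) \<in> T"
    using B by (fastforce simp: T_def right_region_def)
  have T_eq: "G w \<nu> = gri_minus_closed p w \<nu>" if "w \<in> T" "0 < Re \<nu>" for w \<nu>
  proof -
    have "(w, \<nu>) \<in> conv_minus p"
      using that B by (fastforce simp: T_def conv_minus_def)
    then show ?thesis
      using assms(1,2) gri_minus_eq_closed by (auto simp: is_cont_minus_def)
  qed
  show ?thesis
  proof (rule sep_holo_eq_on_connected[of G "dom_minus p" "gri_minus_closed p" "right_region p" T])
    show "sep_holo G (dom_minus p)"
      using assms(2) by (simp add: is_cont_minus_def)
    show "open T"
      unfolding T_def by (intro open_Int open_right_region assms(1) open_halfspace_Im_lt)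
    show "T \<noteq> {}"
      using \<open>Complex B (- B - 1) \<in> T\<close> by blast
  qed (use assms(1,3) T_eq convex_right_region sep_holo_gri_minus_closed right_region_subset_dom_minus in
        \<open>auto simp: T_def convex_connected open_right_region\<close>)
qed

lemma is_dp_cont_root_side:
  assumes "p \<noteq> 0"
  shows "is_dp_cont p (root_side p)"
proof -
  have "is_cont_plus p (gri_plus_closed p)" "is_cont_minus p (gri_minus_closed p)"
    using assms sep_holo_gri_plus_closed sep_holo_gri_minus_closed gri_plus_eq_closed gri_minus_eq_closed
    by (auto simp: is_cont_plus_def is_cont_minus_def)
  then show ?thesis
    unfolding is_dp_cont_def using sep_holo_root_side gri_closed_add_eq_root_side by metis
qed

lemma cut_domain_strip:
  assumes "p \<noteq> 0" "z0 \<in> cut_domain p"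
  obtains S where "open S" "connected S" "z0 \<in> S" "S \<subseteq> cut_domain p" "S \<inter> right_region p \<noteq> {}"
proof -
  define level where "level = {r \<in> roots_of p. Im r = Im z0}"
  define \<delta> where "\<delta> = Min (insert 1 ((\<lambda>r. \<bar>Im r - Im z0\<bar>) ` (roots_of p - level)))"
  define a where "a = Max (insert (Re z0 - 1) (Re ` level))"
  have fin: "finite (roots_of p)" "finite level"
    using finite_roots_of[OF assms(1)] by (auto simp: level_def)
  have "0 < \<delta>"
    unfolding \<delta>_def using fin by (subst Min_gr_iff) (auto simp: level_def)
  have level_left: "Re r < Re z0" if "r \<in> level" for r
  proof (rule ccontr)
    assume "\<not> Re r < Re z0"
    then have "z0 = r + of_real (Re z0 - Re r)" "Re z0 - Re r \<le> 0"
      using that by (auto simp: level_def complex_eq_iff)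
    with assms(2) that show False
      unfolding cut_domain_def level_def by blast
  qed
  have "a < Re z0"
    unfolding a_def using fin level_left by (subst Max_less_iff) auto
  txt \<open>The strip is too thin to meet roots at other heights, and starts to the right of the
    roots at the height of \<open>z0\<close>; so it misses every cut and still reaches the right region.\<close>
  define S where "S = {z. a < Re z \<and> Im z0 - \<delta> < Im z \<and> Im z < Im z0 + \<delta>}"
  have "S = {z. a < Re z} \<inter> {z. Im z0 - \<delta> < Im z} \<inter> {z. Im z < Im z0 + \<delta>}"
    by (auto simp: S_def)
  then have "open S" "convex S"
    by (simp_all add: open_Int open_halfspace_Re_gt open_halfspace_Im_gt open_halfspace_Im_lt
        convex_Int convex_halfspace_Re_gt convex_halfspace_Im_gt convex_halfspace_Im_lt)
  moreover have "S \<subseteq> cut_domain p"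
  proof
    fix z
    assume "z \<in> S"
    show "z \<in> cut_domain p"
      unfolding cut_domain_def
    proof (intro CollectI ballI allI impI notI)
      fix r and t :: real
      assume "r \<in> roots_of p" "t \<le> 0" "z = r + of_real t"
      then have "Im r = Im z" "Re z \<le> Re r"
        by simp_all
      have "r \<in> level"
      proof (rule ccontr)
        assume "r \<notin> level"
        then have "\<delta> \<le> \<bar>Im r - Im z0\<bar>"
          unfolding \<delta>_def using fin \<open>r \<in> roots_of p\<close> by (intro Min_le) auto
        with \<open>z \<in> S\<close> \<open>Im r = Im z\<close> show False
          by (auto simp: S_def)
      qed
      then have "Re r \<le> a"
        unfolding a_def using fin by (intro Max_ge) auto
      with \<open>z \<in> S\<close> \<open>Re z \<le> Re r\<close> show False
        by (simp add: S_def)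
    qed
  qed
  moreover have "S \<inter> right_region p \<noteq> {}"
  proof -
    obtain B where B: "\<And>r. r \<in> roots_of p \<Longrightarrow> \<bar>Re r\<bar> < B \<and> \<bar>Im r\<bar> < B"
      using roots_of_bound[OF assms(1)] by blast
    then have "Complex (max B (a + 1)) (Im z0) \<in> S \<inter> right_region p"
      using \<open>0 < \<delta>\<close> by (fastforce simp: S_def right_region_def)
    then show ?thesis
      by blast
  qed
  ultimately show ?thesis
    using \<open>0 < \<delta>\<close> \<open>a < Re z0\<close> by (intro that[of S]) (auto simp: S_def convex_connected)
qed

lemma is_dp_cont_eq_root_side:
  assumes "p \<noteq> 0" "is_dp_cont p D" "z0 \<in> cut_domain p"
  shows "D z0 \<mu> = root_side p z0 \<mu>"
proof -
  obtain S where S: "open S" "connected S" "z0 \<in> S" "S \<subseteq> cut_domain p" "S \<inter> right_region p \<noteq> {}"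
    using cut_domain_strip[OF assms(1,3)] .
  obtain Gp Gm where Gp: "is_cont_plus p Gp" and Gm: "is_cont_minus p Gm"
    and D_split: "\<forall>z\<in>right_region p. \<forall>\<mu>. D z \<mu> = Gp z \<mu> + Gm z \<mu>"
    using assms(2) unfolding is_dp_cont_def by blast
  have on_right: "D z \<mu> = root_side p z \<mu>" if "z \<in> right_region p" for z
  proof -
    have "D z \<mu> = gri_plus_closed p z \<mu> + gri_minus_closed p z \<mu>"
      using D_split that is_cont_plus_eq_closed[OF assms(1) Gp] is_cont_minus_eq_closed[OF assms(1) Gm]
      by simp
    then show ?thesis
      using gri_closed_add_eq_root_side[OF that] by simp
  qed
  have holo: "(\<lambda>z. D z \<mu>) holomorphic_on S" "(\<lambda>z. root_side p z \<mu>) holomorphic_on S"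
    using assms(2) sep_holo_root_side S(4)
    by (auto simp: is_dp_cont_def sep_holo_def intro: holomorphic_on_subset)
  show ?thesis
    by (rule analytic_continuation_open[of "S \<inter> right_region p" S "\<lambda>z. D z \<mu>" "\<lambda>z. root_side p z \<mu>"])
       (use S open_right_region[OF assms(1)] holo on_right in auto)
qed

section \<open>The derivative side at integer and non-integer orders\<close>

lemma logderiv_poly_eq_sum:
  fixes p :: "complex poly"
  assumes "poly p z \<noteq> 0"
  shows "poly (pderiv p) z / poly p z = (\<Sum>r\<in>roots_of p. of_nat (order r p) / (z - r))"
  using assms
proof (induction p rule: poly_root_order_induct)
  case (no_roots p)
  then have "degree p = 0"
    using fundamental_theorem_of_algebra constant_degree by blast
  then have "pderiv p = 0"
    by (simp add: pderiv_eq_0_iff)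
  moreover have "roots_of p = {}"
    using no_roots by (auto simp: roots_of_def)
  ultimately show ?case
    by simp
next
  case (root p x n)
  have "z \<noteq> x" "poly p z \<noteq> 0" "p \<noteq> 0"
    using root by auto
  have "poly (pderiv ([:-x, 1:] ^ n * p)) z / poly ([:-x, 1:] ^ n * p) z =
          poly (pderiv p) z / poly p z + of_nat n / (z - x)"
  proof -
    define A where "A = (z - x) ^ (n - 1)"
    have "A \<noteq> 0"
      using \<open>z \<noteq> x\<close> by (simp add: A_def)
    have pow: "(z - x) ^ n = A * (z - x)"
      using root.hyps(1) unfolding A_def by (metis One_nat_def Suc_pred power_Suc2)
    have "poly (pderiv ([:-x, 1:] ^ n * p)) z =
            (z - x) ^ n * poly (pderiv p) z + poly p z * (of_nat n * (z - x) ^ (n - 1))"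
      by (simp add: pderiv_mult pderiv_power pderiv_pCons)
    then have deriv_eq: "poly (pderiv ([:-x, 1:] ^ n * p)) z =
                           A * (z - x) * poly (pderiv p) z + poly p z * (of_nat n * A)"
      unfolding pow A_def .
    have poly_eq: "poly ([:-x, 1:] ^ n * p) z = A * (z - x) * poly p z"
      by (simp add: pow)
    show ?thesis
      unfolding deriv_eq poly_eq
      using \<open>A \<noteq> 0\<close> \<open>z \<noteq> x\<close> \<open>poly p z \<noteq> 0\<close> by (simp add: field_simps)
  qed
  moreover have "roots_of ([:-x, 1:] ^ n * p) = insert x (roots_of p)" "x \<notin> roots_of p"
    using root.hyps by (auto simp: roots_of_def)
  moreover have "order x ([:-x, 1:] ^ n * p) = n"
    using root.hyps \<open>p \<noteq> 0\<close> by (subst order_mult) (auto simp: order_power_n_n order_0I)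
  moreover have "order y ([:-x, 1:] ^ n * p) = order y p" if "y \<in> roots_of p" for y
  proof -
    have "order y ([:-x, 1:] ^ n) = 0"
      using that root.hyps by (intro order_0I) (auto simp: roots_of_def)
    then show ?thesis
      using \<open>p \<noteq> 0\<close> by (subst order_mult) auto
  qed
  ultimately show ?case
    using root.IH \<open>poly p z \<noteq> 0\<close> finite_roots_of[OF \<open>p \<noteq> 0\<close>] by simp
qed simp

lemma has_field_derivative_inverse_power:
  fixes r z :: complex
  assumes "z \<noteq> r"
  shows "((\<lambda>w. (- 1) ^ k * fact k / (w - r) ^ Suc k) has_field_derivative
            (- 1) ^ Suc k * fact (Suc k) / (z - r) ^ Suc (Suc k)) (at z)"
proof -
  define u where "u = z - r"
  have "u \<noteq> 0"
    using assms by (simp add: u_def)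
  have D: "((\<lambda>w. (- 1) ^ k * fact k * inverse ((w - r) ^ Suc k)) has_field_derivative
          (- 1) ^ k * fact k * (- (inverse (u ^ Suc k) * (of_nat (Suc k) * u ^ k * 1) * inverse (u ^ Suc k)))) (at z)"
    using \<open>u \<noteq> 0\<close> unfolding u_def by (intro DERIV_cmult DERIV_inverse_fun derivative_eq_intros refl) auto
  have E: "(- 1) ^ k * fact k * (- (inverse (u ^ Suc k) * (of_nat (Suc k) * u ^ k * 1) * inverse (u ^ Suc k))) =
                   (- 1) ^ Suc k * fact (Suc k) / u ^ Suc (Suc k)"
    using \<open>u \<noteq> 0\<close> by (simp add: field_simps)
  from D[unfolded E] show ?thesis
    unfolding u_def divide_inverse .
qed

lemma higher_deriv_sum_inverse:
  fixes c :: "complex \<Rightarrow> complex"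
  assumes "finite R" "z \<notin> R"
  shows "(deriv ^^ k) (\<lambda>z. \<Sum>r\<in>R. c r / (z - r)) z = (\<Sum>r\<in>R. c r * ((- 1) ^ k * fact k / (z - r) ^ Suc k))"
  using assms(2)
proof (induction k arbitrary: z)
  case (Suc k)
  have "open (- R)"
    using assms(1) by (simp add: finite_imp_closed open_Compl)
  then have "\<forall>\<^sub>F w in nhds z. w \<in> - R"
    using Suc.prems by (intro eventually_nhds_in_open) auto
  then have "\<forall>\<^sub>F w in nhds z. (deriv ^^ k) (\<lambda>z. \<Sum>r\<in>R. c r / (z - r)) w =
                 (\<Sum>r\<in>R. c r * ((- 1) ^ k * fact k / (w - r) ^ Suc k))"
    by (rule eventually_mono) (simp add: Suc.IH)
  then have "(deriv ^^ Suc k) (\<lambda>z. \<Sum>r\<in>R. c r / (z - r)) z =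
               deriv (\<lambda>w. \<Sum>r\<in>R. c r * ((- 1) ^ k * fact k / (w - r) ^ Suc k)) z"
    by (simp add: deriv_cong_ev)
  also have "\<dots> = (\<Sum>r\<in>R. c r * ((- 1) ^ Suc k * fact (Suc k) / (z - r) ^ Suc (Suc k)))"
    using Suc.prems
    by (intro DERIV_imp_deriv DERIV_sum DERIV_cmult has_field_derivative_inverse_power) auto
  finally show ?case .
qed simp

lemma dp_pos_Ints:
  assumes "p \<noteq> 0" "\<mu> \<in> \<int>" "0 < Re \<mu>" "z0 \<notin> roots_of p"
  shows "dp p z0 \<mu> = root_side p z0 \<mu>"
proof -
  obtain m where m: "\<mu> = of_int m"
    using assms(2) Ints_cases by blast
  then have "0 < m"
    using assms(3) by simp
  then obtain k where k: "\<mu> = of_nat (Suc k)"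
    using m by (metis gr0_implies_Suc of_int_of_nat_eq pos_int_cases)
  have "open (- roots_of p)"
    using finite_roots_of[OF assms(1)] by (simp add: finite_imp_closed open_Compl)
  then have "\<forall>\<^sub>F w in nhds z0. w \<notin> roots_of p"
    using assms(4) eventually_nhds_in_open by fastforce
  then have "\<forall>\<^sub>F w in nhds z0. poly (pderiv p) w / poly p w = (\<Sum>r\<in>roots_of p. of_nat (order r p) / (w - r))"
    by (rule eventually_mono) (simp add: roots_of_def logderiv_poly_eq_sum)
  then have derivs: "(deriv ^^ k) (\<lambda>z. poly (pderiv p) z / poly p z) z0 =
               (\<Sum>r\<in>roots_of p. of_nat (order r p) * ((- 1) ^ k * fact k / (z0 - r) ^ Suc k))"
    using higher_deriv_sum_inverse[OF finite_roots_of[OF assms(1)] assms(4)]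
    by (simp add: higher_deriv_cong_ev)
  have "rGamma \<mu> = inverse (fact k)"
    using Gamma_fact[of k] by (simp add: k rGamma_inverse_Gamma add.commute)
  have exp_eq: "exp (\<i> * pi * \<mu>) = (- 1) ^ Suc k"
  proof -
    have "exp (\<i> * pi * \<mu>) = exp (of_nat (Suc k) * (\<i> * pi))"
      by (simp add: k mult_ac)
    also have "\<dots> = exp (\<i> * pi) ^ Suc k"
      by (rule exp_of_nat_mult)
    finally show ?thesis
      by simp
  qed
  have powr_eq: "(z0 - r) powr \<mu> = (z0 - r) ^ Suc k" for r
    unfolding k by (rule powr_nat') simp
  have "nat \<lfloor>Re \<mu>\<rfloor> - 1 = k"
    by (simp add: k)
  then have "dp p z0 \<mu> = - rGamma \<mu> * (deriv ^^ k) (\<lambda>z. poly (pderiv p) z / poly p z) z0"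
    using assms(2,3) by (simp add: dp_def)
  also have "\<dots> = (\<Sum>r\<in>roots_of p. - inverse (fact k) * (of_nat (order r p) * ((- 1) ^ k * fact k / (z0 - r) ^ Suc k)))"
    unfolding derivs \<open>rGamma \<mu> = inverse (fact k)\<close> by (simp add: sum_distrib_left)
  also have "\<dots> = (\<Sum>r\<in>roots_of p. (- 1) ^ Suc k * (of_nat (order r p) / (z0 - r) powr \<mu>))"
    by (intro sum.cong refl) (simp add: powr_eq field_simps)
  also have "\<dots> = root_side p z0 \<mu>"
    unfolding root_side_def exp_eq by (simp add: sum_distrib_left)
  finally show ?thesis .
qed

lemma dp_not_Ints:
  assumes "p \<noteq> 0" "\<mu> \<notin> \<int>" "z0 \<in> cut_domain p"
  shows "dp p z0 \<mu> = root_side p z0 \<mu>"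
proof -
  have "(THE v. \<exists>D. is_dp_cont p D \<and> D z0 \<mu> = v) = root_side p z0 \<mu>"
    using is_dp_cont_root_side[OF assms(1)] is_dp_cont_eq_root_side[OF assms(1) _ assms(3)]
    by (intro the_equality) blast+
  then show ?thesis
    using assms(2) by (simp add: dp_def)
qed

lemma dp_nonpos_Ints:
  assumes "p \<noteq> 0" "\<mu> \<in> \<int>" "Re \<mu> \<le> 0" "z0 \<notin> roots_of p"
  shows "dp p z0 \<mu> = root_side p z0 \<mu>"
proof -
  obtain m where m: "\<mu> = of_int m"
    using assms(2) Ints_cases by blast
  then have "m \<le> 0"
    using assms(3) by simp
  then obtain n where n: "\<mu> = - of_nat n"
    using m by (metis nonpos_int_cases of_int_minus of_int_of_nat_eq)
  txt \<open>At \<open>\<mu> = -n\<close> the root side is this polynomial in \<open>z\<close>.\<close>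
  define E where "E z = (- 1) ^ n * (\<Sum>r\<in>roots_of p. of_nat (order r p) * (z - r) ^ n)" for z
  have "E holomorphic_on UNIV"
    unfolding E_def by (intro holomorphic_intros)
  have E_eq: "E z = root_side p z \<mu>" if "z \<notin> roots_of p" for z
  proof -
    have "exp (\<i> * pi * \<mu>) = inverse (exp (of_nat n * (\<i> * pi)))"
      by (simp add: n mult_ac exp_minus)
    also have "exp (of_nat n * (\<i> * pi)) = exp (\<i> * pi) ^ n"
      by (rule exp_of_nat_mult)
    finally have "exp (\<i> * pi * \<mu>) = (- 1) ^ n"
      by (simp add: power_inverse[symmetric])
    moreover have "of_nat (order r p) / (z - r) powr \<mu> = of_nat (order r p) * (z - r) ^ n"
      if "r \<in> roots_of p" for r
    proof -
      have "z - r \<noteq> 0"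
        using that \<open>z \<notin> roots_of p\<close> by auto
      then show ?thesis
        by (simp add: n powr_minus powr_nat' divide_inverse)
    qed
    ultimately show ?thesis
      by (simp add: E_def root_side_def)
  qed
  have "(THE v. \<exists>D E. is_dp_cont p D \<and> E holomorphic_on UNIV \<and>
                 (\<forall>z\<in>cut_domain p. E z = D z \<mu>) \<and> E z0 = v) = root_side p z0 \<mu>"
  proof (rule the_equality)
    show "\<exists>D E. is_dp_cont p D \<and> E holomorphic_on UNIV \<and>
                 (\<forall>z\<in>cut_domain p. E z = D z \<mu>) \<and> E z0 = root_side p z0 \<mu>"
      using is_dp_cont_root_side[OF assms(1)] \<open>E holomorphic_on UNIV\<close> E_eq assms(4) cut_domain_not_root
      by blast
  next
    fix v
    assume "\<exists>D E'. is_dp_cont p D \<and> E' holomorphic_on UNIV \<and>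
                 (\<forall>z\<in>cut_domain p. E' z = D z \<mu>) \<and> E' z0 = v"
    then obtain D E' where D: "is_dp_cont p D" and "E' holomorphic_on UNIV"
      and E'_eq: "\<forall>z\<in>cut_domain p. E' z = D z \<mu>" and "E' z0 = v"
      by blast
    have agree: "E' z = E z" if "z \<in> right_region p" for z
    proof -
      have "z \<in> cut_domain p"
        using that right_region_subset_cut_domain by blast
      then show ?thesis
        using E'_eq is_dp_cont_eq_root_side[OF assms(1) D] E_eq cut_domain_not_root by simp
    qed
    have "E' z0 = E z0"
      by (rule analytic_continuation_open[of "right_region p" UNIV E' E])
        (use open_right_region[OF assms(1)] right_region_nonempty[OF assms(1)] agree
          \<open>E' holomorphic_on UNIV\<close> \<open>E holomorphic_on UNIV\<close> in auto)
    then show "v = root_side p z0 \<mu>"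
      using \<open>E' z0 = v\<close> E_eq[OF assms(4)] by simp
  qed
  then show ?thesis
    using assms(2,3) by (simp add: dp_def)
qed

lemma dp_eq_root_side:
  assumes "p \<noteq> 0" "\<mu> \<notin> \<int> \<Longrightarrow> z0 \<in> cut_domain p" "\<mu> \<in> \<int> \<Longrightarrow> z0 \<notin> roots_of p"
  shows "dp p z0 \<mu> = root_side p z0 \<mu>"
proof (cases "\<mu> \<in> \<int>")
  case True
  then show ?thesis
    using assms(1) assms(3)[OF True] dp_pos_Ints dp_nonpos_Ints by (cases "0 < Re \<mu>") simp_all
next
  case False
  then show ?thesis
    using assms(1) assms(2)[OF False] by (intro dp_not_Ints)
qed

theorem mainTheorem2:
  fixes p :: "complex poly"
  assumes "degree p > 0"
  shows "(\<forall>mu z0.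
            (mu \<notin> \<int> \<longrightarrow> (\<forall>r\<in>roots_of p. \<forall>t::real. t \<le> 0 \<longrightarrow> z0 \<noteq> r + of_real t)) \<and>
            (mu \<in> \<int> \<longrightarrow> z0 \<notin> roots_of p) \<longrightarrow>
            dp p z0 mu = exp (\<i> * pi * mu) * (\<Sum>r\<in>roots_of p. of_nat (order r p) / (z0 - r) powr mu))
       \<and> (\<forall>mu z0. (\<forall>r\<in>roots_of p. Re r < Re z0) \<longrightarrow>
            dp p z0 mu = exp (\<i> * pi * mu) * (\<Sum>r\<in>roots_of p. of_nat (order r p) / (z0 - r) powr mu))"
proof -
  have p: "p \<noteq> 0"
    using assms by auto
  have "dp p z0 mu = root_side p z0 mu"
    if "mu \<notin> \<int> \<longrightarrow> z0 \<in> cut_domain p" "mu \<in> \<int> \<longrightarrow> z0 \<notin> roots_of p" for mu z0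
    using dp_eq_root_side[OF p] that by blast
  moreover have "z0 \<in> cut_domain p" "z0 \<notin> roots_of p" if "\<forall>r\<in>roots_of p. Re r < Re z0" for z0
    using that right_region_subset_cut_domain cut_domain_not_root by (auto simp: right_region_def)
  ultimately show ?thesis
    unfolding root_side_def[symmetric] cut_domain_def by blast
qed

end
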